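(* Let $p$ be a prime, $0<\alpha\le1$, $k$ a positive integer, and let $S\subseteq\mathbb{Z}_p$ be such that all $k$-wise sums of different elements of $S$ are distinct, excluding permutations of the summands (i.e., for any two $k$-element subsets $T,T'\subseteq S$, $\sum_{t\in T}t=\sum_{t\in T'}t$ in $\mathbb{Z}_p$ implies $T=T'$). Then $$\mathcal{C}^{\mathrm{bsgs1}}_\alpha(S)>\left(\alpha|S|/(2k)\right)^{k/(k+1)}.$$
   Context: The BSGS-1 $\alpha$-complexity $\mathcal{C}^{\mathrm{bsgs1}}_\alpha(S)$ of $S\subseteq\mathbb{Z}_p$ is the smallest integer $n$ such that there exist $X,Y\subseteq\mathbb{Z}_p$ with $|X|=|Y|=n$ and $|S\cap(X-Y)|\geq\alpha|S|$, where $X-Y=\{x-y\mid x\in X,y\in Y\}$ (computed in $\mathbb{Z}_p$). *)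

theory Defs
  imports Complex_Main "HOL-Computational_Algebra.Primes"
begin

text \<open>Z_p is represented by the integers {0..<p}; arithmetic is taken mod p.\<close>

definition zp :: "int \<Rightarrow> int set" where
  "zp p = {0..<p}"

definition diffset_mod :: "int \<Rightarrow> int set \<Rightarrow> int set \<Rightarrow> int set" where
  "diffset_mod p X Y = {(x - y) mod p | x y. x \<in> X \<and> y \<in> Y}"

definition bsgs1_complexity :: "int \<Rightarrow> real \<Rightarrow> int set \<Rightarrow> nat" where
  "bsgs1_complexity p \<alpha> S =
     (LEAST n. \<exists>X Y. X \<subseteq> zp p \<and> Y \<subseteq> zp p \<and> card X = n \<and> card Y = n \<and>
        real (card (S \<inter> diffset_mod p X Y)) \<ge> \<alpha> * real (card S))"

definition distinct_k_sums :: "int \<Rightarrow> nat \<Rightarrow> int set \<Rightarrow> bool" where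
  "distinct_k_sums p k S \<longleftrightarrow>
     (\<forall>T T'. T \<subseteq> S \<and> T' \<subseteq> S \<and> card T = k \<and> card T' = k \<and>
        (\<Sum>T) mod p = (\<Sum>T') mod p \<longrightarrow> T = T')"

end

theory Submission
  imports Defs
begin

(* Let X, Y of size N cover m elements of S, and fix for every covered s one pair (x, y) in
   X \<times> Y with s = x - y mod p. These pairs are the edges of a bipartite graph on X and Y in
   which, by the distinct k-sums property (padded to exactly k summands, which needs m \<ge> 2k),
   no two disjoint sets of at most k edges of equal size have equal sums of x - y. Deleting
   vertices of small degree leaves a nonempty subgraph of minimum degree c = m / (2N). In a
   breadth-first layering of it the alternating sum of x - y along a shortest path telescopes
   to a quantity depending only on the endpoints, so two shortest paths of length at most k
   to the same vertex would give two forbidden edge sets. Hence the first k layers form a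
   tree, and layer k, which lies on one side, has at least c (c - 1)^(k - 1) and at most N
   vertices. Solving for m gives m < 2k N^((k + 1)/k). *)

definition min_degree_ge :: "real \<Rightarrow> ('a \<times> 'b) set \<Rightarrow> bool" where
  "min_degree_ge c E \<longleftrightarrow>
     (\<forall>(x, y)\<in>E. c \<le> real (card (E `` {x})) \<and> c \<le> real (card (E\<inverse> `` {y})))"

lemma remove_low_degree_vertex:
  fixes E :: "('a \<times> 'b) set" and c :: real
  assumes "finite E" and "x \<in> Domain E" and "real (card (E `` {x})) < c" and "0 \<le> c"
    and "c * (real (card (Domain E)) + real (card (Range E))) \<le> real (card E)"
  obtains E' where "E' \<subset> E"
    and "c * (real (card (Domain E')) + real (card (Range E'))) < real (card E')"
proof
  let ?E' = "E - {x} \<times> UNIV"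
  have "E \<inter> {x} \<times> UNIV = {x} \<times> E `` {x}" by auto
  then have "card (E \<inter> {x} \<times> UNIV) = card (E `` {x})"
    by (simp add: card_cartesian_product)
  moreover have "card (E \<inter> {x} \<times> UNIV) \<le> card E"
    using \<open>finite E\<close> by (simp add: card_mono)
  ultimately have card_E': "real (card ?E') = real (card E) - real (card (E `` {x}))"
    using card_Diff_subset_Int[of E "{x} \<times> UNIV"] \<open>finite E\<close> by simp
  have "Domain ?E' = Domain E - {x}" by auto
  then have "card (Domain ?E') = card (Domain E) - 1"
    using \<open>x \<in> Domain E\<close> \<open>finite E\<close> by (simp add: finite_Domain)
  moreover have "card (Range ?E') \<le> card (Range E)"
    by (intro card_mono) (auto simp: finite_Range \<open>finite E\<close>)
  moreover have "card (Domain E) \<ge> 1"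
    using \<open>x \<in> Domain E\<close> \<open>finite E\<close> by (auto simp: Suc_le_eq card_gt_0_iff finite_Domain)
  ultimately have "c * (real (card (Domain ?E')) + real (card (Range ?E')))
      \<le> c * (real (card (Domain E)) + real (card (Range E))) - c"
    using \<open>0 \<le> c\<close> by (simp add: algebra_simps mult_left_mono)
  with assms(3,5) card_E'
  show "c * (real (card (Domain ?E')) + real (card (Range ?E'))) < real (card ?E')"
    by linarith
  show "?E' \<subset> E" using \<open>x \<in> Domain E\<close> by auto
qed

lemma denser_psubset_if_not_min_degree:
  fixes E :: "('a \<times> 'b) set" and c :: real
  assumes "finite E" and "0 \<le> c" and "\<not> min_degree_ge c E"
    and "c * (real (card (Domain E)) + real (card (Range E))) \<le> real (card E)"
  obtains E' where "E' \<subset> E"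
    and "c * (real (card (Domain E')) + real (card (Range E'))) < real (card E')"
proof -
  obtain x y where "(x, y) \<in> E" and "real (card (E `` {x})) < c \<or> real (card (E\<inverse> `` {y})) < c"
    using assms(3) by (force simp: min_degree_ge_def)
  then consider "x \<in> Domain E" "real (card (E `` {x})) < c"
    | "y \<in> Domain (E\<inverse>)" "real (card (E\<inverse> `` {y})) < c" by auto
  then show thesis
  proof cases
    case 1
    then show thesis using remove_low_degree_vertex[of E x c] assms that by blast
  next
    case 2
    obtain E' where "E' \<subset> E\<inverse>"
      and "c * (real (card (Domain E')) + real (card (Range E'))) < real (card E')"
      using remove_low_degree_vertex[of "E\<inverse>" y c] 2 assms by (auto simp: add.commute)
    then show thesis using that[of "E'\<inverse>"] by (auto simp: add.commute)
  qed
qed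

lemma obtain_min_degree_subrelation:
  fixes E :: "('a \<times> 'b) set" and c :: real
  assumes "finite E" and "E \<noteq> {}" and "0 \<le> c"
    and "c * (real (card (Domain E)) + real (card (Range E))) \<le> real (card E)"
  obtains E' where "E' \<subseteq> E" and "E' \<noteq> {}" and "min_degree_ge c E'"
proof -
  have "\<exists>E'\<subseteq>E. E' \<noteq> {} \<and> min_degree_ge c E'"
    using assms(1,2,4)
  proof (induction E rule: finite_psubset_induct)
    case (psubset E)
    show ?case
    proof (cases "min_degree_ge c E")
      case False
      then obtain E1 where "E1 \<subset> E"
        and dense: "c * (real (card (Domain E1)) + real (card (Range E1))) < real (card E1)"
        using denser_psubset_if_not_min_degree psubset.hyps psubset.prems(2) \<open>0 \<le> c\<close> by blast
      moreover have "E1 \<noteq> {}" using dense by auto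
      ultimately show ?thesis using psubset.IH by (meson less_imp_le order.trans psubsetE)
    qed (use \<open>E \<noteq> {}\<close> in blast)
  qed
  then show ?thesis using that by blast
qed

definition pair_diff :: "'a::ab_group_add \<times> 'a \<Rightarrow> 'a" where
  "pair_diff e = fst e - snd e"

definition distinct_diff_sums :: "nat \<Rightarrow> ('a::ab_group_add \<times> 'a) set \<Rightarrow> bool" where
  "distinct_diff_sums k E \<longleftrightarrow>
     (\<forall>A B. A \<subseteq> E \<longrightarrow> B \<subseteq> E \<longrightarrow> A \<inter> B = {} \<longrightarrow> card A = card B \<longrightarrow> card A \<le> k \<longrightarrow>
        sum pair_diff A = sum pair_diff B \<longrightarrow> A = {})"

lemma distinct_diff_sumsD:
  assumes "distinct_diff_sums k E" and "A \<subseteq> E" and "B \<subseteq> E" and "A \<inter> B = {}"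
    and "card A = card B" and "card A \<le> k" and "sum pair_diff A = sum pair_diff B"
  shows "A = {}"
  using assms unfolding distinct_diff_sums_def by blast

lemma distinct_diff_sums_subset:
  "distinct_diff_sums k E \<Longrightarrow> E' \<subseteq> E \<Longrightarrow> distinct_diff_sums k E'"
  unfolding distinct_diff_sums_def by (meson order_trans)

fun edge :: "'a + 'a \<Rightarrow> 'a + 'a \<Rightarrow> 'a \<times> 'a" where
  "edge (Inl x) (Inr y) = (x, y)"
| "edge (Inr y) (Inl x) = (x, y)"
| "edge _ _ = undefined"

fun potential :: "'a + 'a \<Rightarrow> 'a" where
  "potential (Inl x) = x"
| "potential (Inr y) = y"

definition alt_step_diff :: "(nat \<Rightarrow> 'a::ab_group_add + 'a) \<Rightarrow> nat \<Rightarrow> 'a" where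
  "alt_step_diff f t =
     (if even t then pair_diff (edge (f t) (f (Suc t))) else - pair_diff (edge (f t) (f (Suc t))))"

locale distinct_diff_sums_graph =
  fixes E :: "('a::ab_group_add \<times> 'a) set" and k :: nat and x0 :: 'a
  assumes finite_E: "finite E"
    and distinct_sums: "distinct_diff_sums k E"
    and root: "x0 \<in> Domain E"
begin

fun adj :: "'a + 'a \<Rightarrow> 'a + 'a \<Rightarrow> bool" where
  "adj (Inl x) (Inr y) \<longleftrightarrow> (x, y) \<in> E"
| "adj (Inr y) (Inl x) \<longleftrightarrow> (x, y) \<in> E"
| "adj _ _ \<longleftrightarrow> False"

lemma adj_sym: "adj u w \<Longrightarrow> adj w u"
  by (cases u; cases w) auto

lemma adj_isl: "adj u w \<Longrightarrow> isl w \<longleftrightarrow> \<not> isl u"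
  by (cases u; cases w) auto

lemma adj_vertex: "adj u w \<Longrightarrow> w \<in> Inl ` Domain E \<union> Inr ` Range E"
  by (cases u; cases w) auto

lemma edge_mem: "adj u w \<Longrightarrow> edge u w \<in> E"
  by (cases u; cases w) auto

lemma edge_eqD:
  "adj u w \<Longrightarrow> adj u' w' \<Longrightarrow> edge u w = edge u' w' \<Longrightarrow>
    u = u' \<and> w = w' \<or> u = w' \<and> w = u'"
  by (cases u; cases w; cases u'; cases w') auto

lemma potential_diff:
  "adj u w \<Longrightarrow>
    potential u - potential w = (if isl u then pair_diff (edge u w) else - pair_diff (edge u w))"
  by (cases u; cases w) (auto simp: pair_diff_def)

lemma neighbours_Inl: "{w. adj (Inl x) w} = Inr ` (E `` {x})"
  by (auto elim: adj.elims)

lemma neighbours_Inr: "{w. adj (Inr y) w} = Inl ` (E\<inverse> `` {y})"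
  by (auto elim: adj.elims)

lemma finite_neighbours: "finite {w. adj u w}"
  using finite_E by (cases u) (auto simp: neighbours_Inl neighbours_Inr finite_Image)

fun ball :: "nat \<Rightarrow> ('a + 'a) set" where
  "ball 0 = {Inl x0}"
| "ball (Suc i) = ball i \<union> {w. \<exists>u\<in>ball i. adj u w}"

fun layer :: "nat \<Rightarrow> ('a + 'a) set" where
  "layer 0 = {Inl x0}"
| "layer (Suc i) = ball (Suc i) - ball i"

lemma ball_mono: "i \<le> j \<Longrightarrow> ball i \<subseteq> ball j"
  by (induction j) (auto simp: le_Suc_eq)

lemma ball_eq_UN_layer: "ball i = (\<Union>t\<le>i. layer t)"
proof (induction i)
  case (Suc i)
  have "ball (Suc i) = ball i \<union> layer (Suc i)" by auto
  then show ?case using Suc by (simp only: atMost_Suc UN_insert) blast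
qed simp

lemma layer_unique: "w \<in> layer t \<Longrightarrow> w \<in> layer t' \<Longrightarrow> t = t'"
proof (induction t t' rule: linorder_wlog)
  case (le t t')
  show ?case
  proof (rule ccontr)
    assume "t \<noteq> t'"
    with le obtain s where "t' = Suc s" "t \<le> s" by (cases t') auto
    then have "w \<in> ball s" using le.prems(1) ball_eq_UN_layer[of s] by auto
    then show False using le.prems(2) \<open>t' = Suc s\<close> by simp
  qed
qed (simp add: eq_commute)

lemma finite_ball: "finite (ball i)"
proof -
  have "ball i \<subseteq> insert (Inl x0) (Inl ` Domain E \<union> Inr ` Range E)"
    by (induction i) (auto dest: adj_vertex)
  then show ?thesis
    using finite_E by (auto intro: finite_subset simp: finite_Domain finite_Range)
qed

lemma finite_layer: "finite (layer i)"
  by (rule finite_subset[OF _ finite_ball[of i]]) (auto simp: ball_eq_UN_layer)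

lemma layer_parent:
  assumes "w \<in> layer (Suc i)"
  obtains u where "u \<in> layer i" and "adj u w"
proof -
  from assms obtain u where u: "u \<in> ball i" "adj u w" "w \<notin> ball i" by auto
  then obtain t where "t \<le> i" "u \<in> layer t" using ball_eq_UN_layer by auto
  moreover have "\<not> t < i"
  proof
    assume "t < i"
    then have "w \<in> ball (Suc t)" using \<open>u \<in> layer t\<close> u(2) ball_eq_UN_layer[of t] by auto
    then show False using ball_mono[of "Suc t" i] \<open>t < i\<close> u(3) by auto
  qed
  ultimately show thesis using that u(2) by (metis le_neq_implies_less)
qed

lemma isl_layer: "w \<in> layer i \<Longrightarrow> isl w \<longleftrightarrow> even i"
proof (induction i arbitrary: w)
  case (Suc i)
  then obtain u where "u \<in> layer i" "adj u w" by (blast elim: layer_parent)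
  then show ?case using Suc.IH adj_isl by auto
qed simp

lemma layer_neighbour:
  assumes "u \<in> layer i" and "adj u w"
  shows "w \<in> layer (Suc i) \<or> 0 < i \<and> w \<in> layer (i - 1)"
proof (cases "w \<in> ball i")
  case True
  then obtain t where "t \<le> i" and w: "w \<in> layer t" using ball_eq_UN_layer by auto
  have "t \<noteq> i"
    using isl_layer[OF assms(1)] isl_layer[OF w] adj_isl[OF assms(2)] by auto
  moreover have "i \<le> Suc t"
  proof -
    have "u \<in> ball (Suc t)"
      using w adj_sym[OF assms(2)] ball_eq_UN_layer[of t] by auto
    then obtain s where "s \<le> Suc t" "u \<in> layer s" using ball_eq_UN_layer by auto
    then show ?thesis using layer_unique[OF \<open>u \<in> layer s\<close> assms(1)] by simp
  qed
  ultimately have "i = Suc t" using \<open>t \<le> i\<close> by simp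
  then show ?thesis using w by simp
next
  case False
  then show ?thesis using assms ball_eq_UN_layer[of i] by auto
qed

lemma card_layer_le_max:
  assumes "0 < i"
  shows "card (layer i) \<le> max (card (Domain E)) (card (Range E))"
proof -
  have "layer i \<subseteq> (if even i then Inl ` Domain E else Inr ` Range E)"
  proof
    fix w assume w: "w \<in> layer i"
    obtain i' where "i = Suc i'" using assms by (cases i) auto
    then obtain p where "adj p w" using w by (blast elim: layer_parent)
    then show "w \<in> (if even i then Inl ` Domain E else Inr ` Range E)"
      using adj_vertex isl_layer[OF w] by fastforce
  qed
  then have "card (layer i) \<le> card (if even i then Inl ` Domain E else Inr ` Range E)"
    using finite_E by (intro card_mono) (auto simp: finite_Domain finite_Range)
  then show ?thesis by (simp add: card_image split: if_splits)
qed

definition layered_path :: "nat \<Rightarrow> (nat \<Rightarrow> 'a + 'a) \<Rightarrow> bool" where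
  "layered_path j f \<longleftrightarrow> (\<forall>t\<le>j. f t \<in> layer t) \<and> (\<forall>t<j. adj (f t) (f (Suc t)))"

lemma layered_path_snoc:
  assumes "layered_path j f" and "w \<in> layer (Suc j)" and "adj (f j) w"
  shows "layered_path (Suc j) (f(Suc j := w))"
  using assms by (auto simp: layered_path_def le_Suc_eq less_Suc_eq simp del: layer.simps)

lemma layered_path_exists:
  assumes "w \<in> layer j"
  obtains f where "layered_path j f" and "f j = w"
  using assms
proof (induction j arbitrary: w thesis)
  case 0
  then show ?case by (auto simp: layered_path_def)
next
  case (Suc j)
  obtain u where "u \<in> layer j" "adj u w" using Suc.prems(2) by (blast elim: layer_parent)
  then obtain f where "layered_path j f" "f j = u" using Suc.IH by blast
  then show ?case using layered_path_snoc \<open>adj u w\<close> Suc.prems by fastforce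
qed

lemma layered_path_edge_mem:
  "layered_path j f \<Longrightarrow> t < j \<Longrightarrow> edge (f t) (f (Suc t)) \<in> E"
  by (simp add: layered_path_def edge_mem)

lemma layered_path_edge_eqD:
  assumes "layered_path j f" and "layered_path j' g" and "t < j" and "t' < j'"
    and "edge (f t) (f (Suc t)) = edge (g t') (g (Suc t'))"
  shows "t = t'" and "f t = g t"
proof -
  have layers: "f t \<in> layer t" "f (Suc t) \<in> layer (Suc t)"
    "g t' \<in> layer t'" "g (Suc t') \<in> layer (Suc t')"
    using assms(1-4) by (auto simp: layered_path_def simp del: layer.simps)
  have "f t = g t' \<and> f (Suc t) = g (Suc t') \<or> f t = g (Suc t') \<and> f (Suc t) = g t'"
    using edge_eqD assms by (auto simp: layered_path_def)
  then have "t = t' \<and> f t = g t"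
  proof (elim disjE conjE)
    assume "f t = g (Suc t')" "f (Suc t) = g t'"
    then have "t = Suc t'" "Suc t = t'" using layers layer_unique by metis+
    then show ?thesis by simp
  next
    assume "f t = g t'" "f (Suc t) = g (Suc t')"
    then show ?thesis using layers layer_unique by metis
  qed
  then show "t = t'" and "f t = g t" by auto
qed

lemma layered_path_telescope:
  assumes "layered_path j f"
  shows "(\<Sum>t<j. alt_step_diff f t) = x0 - potential (f j)"
proof -
  have "potential (f t) - potential (f (Suc t)) = alt_step_diff f t" if "t < j" for t
  proof -
    have "f t \<in> layer t" and "adj (f t) (f (Suc t))"
      using assms that by (auto simp: layered_path_def simp del: layer.simps)
    then show ?thesis using potential_diff isl_layer by (simp add: alt_step_diff_def)
  qed
  moreover have "f 0 = Inl x0" using assms by (auto simp: layered_path_def)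
  ultimately show ?thesis
    using sum_lessThan_telescope'[of "potential \<circ> f" j] by simp
qed

(* If the paths differ, let I be the steps where their edges differ. Taking the edge of f at the
   even steps of I and that of g at the odd ones, and vice versa, gives two disjoint edge sets of
   size |I| \<le> k; both alternating sums telescope to x0 - potential (f j), so their difference
   sums agree. *)
lemma layered_path_unique:
  assumes f: "layered_path j f" and g: "layered_path j g" and "j \<le> k" and "f j = g j"
    and "t < j"
  shows "f t = g t"
proof -
  define ef where "ef t = edge (f t) (f (Suc t))" for t
  define eg where "eg t = edge (g t) (g (Suc t))" for t
  define I where "I = {t. t < j \<and> ef t \<noteq> eg t}"
  define a where "a t = (if even t then ef t else eg t)" for t
  define b where "b t = (if even t then eg t else ef t)" for t
  have pos: "t = t'" if "t \<in> I" "t' \<in> I" "{ef t, eg t} \<inter> {ef t', eg t'} \<noteq> {}" for t t'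
    using that layered_path_edge_eqD(1)[OF f f] layered_path_edge_eqD(1)[OF f g]
      layered_path_edge_eqD(1)[OF g f] layered_path_edge_eqD(1)[OF g g]
    unfolding I_def ef_def eg_def by auto
  have "inj_on a I" "inj_on b I"
    by (auto intro!: inj_onI dest: pos simp: a_def b_def split: if_splits)
  moreover have "a ` I \<inter> b ` I = {}"
    using pos by (fastforce simp: a_def b_def I_def split: if_splits)
  moreover have "a ` I \<subseteq> E" "b ` I \<subseteq> E"
    using layered_path_edge_mem f g by (auto simp: a_def b_def ef_def eg_def I_def)
  moreover have "card I \<le> k"
    using card_mono[of "{..<j}" I] \<open>j \<le> k\<close> by (fastforce simp: I_def)
  moreover have "sum pair_diff (a ` I) = sum pair_diff (b ` I)"
  proof -
    have "(\<Sum>t\<in>I. pair_diff (a t) - pair_diff (b t)) = (\<Sum>t<j. alt_step_diff f t - alt_step_diff g t)"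
      by (rule sum.mono_neutral_cong_left)
        (auto simp: I_def a_def b_def ef_def eg_def alt_step_diff_def)
    also have "\<dots> = 0"
      using layered_path_telescope[OF f] layered_path_telescope[OF g] \<open>f j = g j\<close>
      by (simp add: sum_subtractf)
    finally show ?thesis
      using \<open>inj_on a I\<close> \<open>inj_on b I\<close> by (simp add: sum.reindex sum_subtractf)
  qed
  ultimately have "I = {}"
    using distinct_diff_sumsD[OF distinct_sums, of "a ` I" "b ` I"] by (simp add: card_image)
  then show "f t = g t"
    using layered_path_edge_eqD(2)[OF f g \<open>t < j\<close> \<open>t < j\<close>] \<open>t < j\<close>
    by (auto simp: I_def ef_def eg_def)
qed

lemma unique_parent:
  assumes "i < k" and "w \<in> layer (Suc i)" and "u \<in> layer i" and "u' \<in> layer i"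
    and "adj u w" and "adj u' w"
  shows "u = u'"
proof -
  obtain f g where f: "layered_path i f" "f i = u" and g: "layered_path i g" "g i = u'"
    using layered_path_exists assms(3,4) by metis
  have "layered_path (Suc i) (f(Suc i := w))" "layered_path (Suc i) (g(Suc i := w))"
    using layered_path_snoc[OF f(1) assms(2)] layered_path_snoc[OF g(1) assms(2)] f(2) g(2) assms(5,6)
    by simp_all
  from layered_path_unique[OF this, of i] show ?thesis
    using assms(1) f(2) g(2) by simp
qed

context
  fixes c :: real
  assumes min_degree: "min_degree_ge c E"
begin

lemma degree_ge: "adj u w \<Longrightarrow> c \<le> real (card {v. adj u v})"
  using min_degree
  by (cases u; cases w) (auto simp: neighbours_Inl neighbours_Inr card_image min_degree_ge_def)

lemma card_children_ge:
  assumes "u \<in> layer i" and "0 < i" and "i \<le> k"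
  shows "c - 1 \<le> real (card ({w. adj u w} \<inter> layer (Suc i)))"
proof -
  obtain i' where i': "i = Suc i'" using assms(2) by (cases i) auto
  obtain p where "p \<in> layer i'" "adj p u" using assms(1) i' by (blast elim: layer_parent)
  then have "c \<le> real (card {w. adj u w})" using degree_ge adj_sym by blast
  moreover have "card {w. adj u w} \<le> card ({w. adj u w} \<inter> layer (Suc i)) + 1"
  proof -
    have "card {w. adj u w} \<le> card ({w. adj u w} \<inter> layer (Suc i) \<union> {w. adj u w} \<inter> layer i')"
      using layer_neighbour[OF assms(1)] i' by (intro card_mono) (auto simp: finite_neighbours)
    also have "\<dots> \<le> card ({w. adj u w} \<inter> layer (Suc i)) + card ({w. adj u w} \<inter> layer i')"
      by (rule card_Un_le)
    also have "card ({w. adj u w} \<inter> layer i') \<le> 1"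
      using unique_parent[of i' u] assms(1,3) i' adj_sym finite_layer
      by (auto simp: card_le_Suc0_iff_eq)
    finally show ?thesis by simp
  qed
  ultimately show ?thesis by linarith
qed

lemma card_layer_Suc_ge:
  assumes "0 < i" and "i < k"
  shows "(c - 1) * real (card (layer i)) \<le> real (card (layer (Suc i)))"
proof -
  define children where "children u = {w. adj u w} \<inter> layer (Suc i)" for u
  have "(c - 1) * real (card (layer i)) \<le> (\<Sum>u\<in>layer i. real (card (children u)))"
    using sum_mono[of "layer i" "\<lambda>_. c - 1"] card_children_ge assms
    by (simp add: children_def mult.commute)
  also have "\<dots> = real (card (\<Union>u\<in>layer i. children u))"
  proof -
    have "children u \<inter> children u' = {}" if "u \<in> layer i" "u' \<in> layer i" "u \<noteq> u'" for u u'
      using unique_parent[OF assms(2) _ that(1,2)] that(3) unfolding children_def by blast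
    then show ?thesis
      using finite_layer finite_neighbours by (subst card_UN_disjoint) (auto simp: children_def)
  qed
  also have "\<dots> \<le> real (card (layer (Suc i)))"
    unfolding of_nat_le_iff by (rule card_mono[OF finite_layer]) (auto simp: children_def)
  finally show ?thesis .
qed

lemma card_layer_ge:
  assumes "1 \<le> c" and "0 < i" and "i \<le> k"
  shows "c * (c - 1) ^ (i - 1) \<le> real (card (layer i))"
  using assms(2,3)
proof (induction i)
  case (Suc i)
  show ?case
  proof (cases "i = 0")
    case True
    obtain y where "adj (Inl x0) (Inr y)" using root by auto
    then have "c \<le> real (card {w. adj (Inl x0) w})" by (rule degree_ge)
    moreover have "layer (Suc 0) = {w. adj (Inl x0) w}" by auto
    ultimately show ?thesis using True by simp
  next
    case False
    then have "(c - 1) * (c * (c - 1) ^ (i - 1)) \<le> (c - 1) * real (card (layer i))"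
      using Suc assms(1) by (intro mult_left_mono) simp_all
    also have "\<dots> \<le> real (card (layer (Suc i)))"
      using card_layer_Suc_ge False Suc.prems by simp
    finally show ?thesis using False by (cases i) (simp_all add: algebra_simps)
  qed
qed simp

end

end

theorem distinct_diff_sums_moore_bound:
  fixes E :: "('a::ab_group_add \<times> 'a) set" and c :: real
  assumes "finite E" and "E \<noteq> {}" and "distinct_diff_sums k E" and "0 < k"
    and "1 \<le> c" and "min_degree_ge c E"
  shows "c * (c - 1) ^ (k - 1) \<le> real (max (card (Domain E)) (card (Range E)))"
proof -
  obtain x0 where "x0 \<in> Domain E" using assms(2) by auto
  then interpret distinct_diff_sums_graph E k x0
    using assms(1,3) by unfold_locales
  show ?thesis
    using card_layer_ge[OF assms(6,5,4) order.refl] card_layer_le_max[OF assms(4)]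
    by (meson of_nat_le_iff order_trans)
qed

lemma distinct_diff_sums_card_bound:
  fixes E :: "('a::ab_group_add \<times> 'a) set" and N :: nat
  assumes "E \<subseteq> X \<times> Y" and "finite X" and "finite Y" and "card X \<le> N" and "card Y \<le> N"
    and "distinct_diff_sums k E" and "0 < k" and "1 \<le> real (card E) / (2 * N)"
  shows "real (card E) / (2 * N) * (real (card E) / (2 * N) - 1) ^ (k - 1) \<le> N"
proof -
  define c where "c = real (card E) / (2 * N)"
  have "0 < N" using assms(8) by (cases N) auto
  have "finite E" using assms(1-3) finite_subset by blast
  have dom_range_le: "card (Domain E') \<le> N" "card (Range E') \<le> N" if "E' \<subseteq> E" for E'
  proof -
    have "Domain E' \<subseteq> X" "Range E' \<subseteq> Y" using that assms(1) by auto
    then have "card (Domain E') \<le> card X" "card (Range E') \<le> card Y"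
      using assms(2,3) by (simp_all add: card_mono)
    then show "card (Domain E') \<le> N" "card (Range E') \<le> N" using assms(4,5) by simp_all
  qed
  have "c * (real (card (Domain E)) + real (card (Range E))) \<le> c * (2 * N)"
    using dom_range_le[of E] assms(8) by (intro mult_left_mono) (simp_all add: c_def)
  also have "\<dots> = real (card E)" using \<open>0 < N\<close> by (simp add: c_def)
  finally have "c * (real (card (Domain E)) + real (card (Range E))) \<le> real (card E)" .
  moreover have "E \<noteq> {}" "0 \<le> c" using assms(8) by (auto simp: c_def)
  ultimately obtain E' where E': "E' \<subseteq> E" "E' \<noteq> {}" "min_degree_ge c E'"
    using obtain_min_degree_subrelation[OF \<open>finite E\<close>, of c] by blast
  have "c * (c - 1) ^ (k - 1) \<le> real (max (card (Domain E')) (card (Range E')))"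
    using distinct_diff_sums_moore_bound[OF finite_subset[OF E'(1) \<open>finite E\<close>] E'(2)
        distinct_diff_sums_subset[OF assms(6) E'(1)] assms(7) _ E'(3)] assms(8)
    by (simp add: c_def)
  also have "\<dots> \<le> N" using dom_range_le[OF E'(1)] by simp
  finally show ?thesis unfolding c_def .
qed

lemma distinct_k_sums_subset:
  assumes "distinct_k_sums p k S" and "S' \<subseteq> S"
  shows "distinct_k_sums p k S'"
  unfolding distinct_k_sums_def
proof (intro allI impI)
  fix T T'
  assume "T \<subseteq> S' \<and> T' \<subseteq> S' \<and> card T = k \<and> card T' = k \<and> (\<Sum>T) mod p = (\<Sum>T') mod p"
  then show "T = T'"
    using assms(1)[unfolded distinct_k_sums_def, rule_format, of T T'] assms(2) by auto
qed

lemma distinct_k_sums_fewer_summands: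
  assumes "distinct_k_sums p k S" and "finite S" and "T \<subseteq> S" and "T' \<subseteq> S"
    and "card T = card T'" and "card T \<le> k" and "k + card T \<le> card S"
    and "(\<Sum>T) mod p = (\<Sum>T') mod p"
  shows "T = T'"
proof -
  have "finite T" "finite T'" using assms(2-4) finite_subset by blast+
  have "card (T \<union> T') \<le> 2 * card T" using card_Un_le[of T T'] assms(5) by simp
  then have "k - card T \<le> card (S - (T \<union> T'))"
    using card_Diff_subset[of "T \<union> T'" S] \<open>finite T\<close> \<open>finite T'\<close> assms(3,4,7) by simp
  then obtain P where P: "P \<subseteq> S - (T \<union> T')" "card P = k - card T"
    by (meson obtain_subset_with_card_n)
  have "finite P" using P(1) assms(2) finite_subset by blast
  have disjoint: "T \<inter> P = {}" "T' \<inter> P = {}" using P(1) by auto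
  then have "card (T \<union> P) = k" "card (T' \<union> P) = k"
    using P(2) \<open>finite P\<close> \<open>finite T\<close> \<open>finite T'\<close> assms(5,6)
    by (simp_all add: card_Un_disjoint)
  moreover have "(\<Sum>(T \<union> P)) mod p = (\<Sum>(T' \<union> P)) mod p"
  proof -
    have "(\<Sum>(T \<union> P)) mod p = ((\<Sum>T) mod p + \<Sum>P) mod p"
      using disjoint \<open>finite P\<close> \<open>finite T\<close> by (simp add: sum.union_disjoint mod_add_left_eq)
    also have "\<dots> = (\<Sum>(T' \<union> P)) mod p"
      using disjoint \<open>finite P\<close> \<open>finite T'\<close> assms(8)
      by (simp add: sum.union_disjoint mod_add_left_eq)
    finally show ?thesis .
  qed
  moreover have "T \<union> P \<subseteq> S" "T' \<union> P \<subseteq> S" using P assms(3,4) by auto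
  ultimately have "T \<union> P = T' \<union> P" using assms(1) unfolding distinct_k_sums_def by blast
  then show ?thesis using P(1) by blast
qed

lemma distinct_k_sums_imp_distinct_diff_sums:
  assumes "distinct_k_sums p k S" and "finite S" and "2 * k \<le> card S"
    and "bij_betw (\<lambda>e. pair_diff e mod p) E S"
  shows "distinct_diff_sums k E"
  unfolding distinct_diff_sums_def
proof (intro allI impI)
  fix A B assume A: "A \<subseteq> E" and B: "B \<subseteq> E" and "A \<inter> B = {}" and "card A = card B"
    and "card A \<le> k" and "sum pair_diff A = sum pair_diff B"
  let ?g = "\<lambda>e. pair_diff e mod p"
  have inj: "inj_on ?g A" "inj_on ?g B"
    using assms(4) A B by (auto simp: bij_betw_def intro: inj_on_subset)
  have "(\<Sum>(?g ` A)) mod p = (\<Sum>(?g ` B)) mod p"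
    using \<open>sum pair_diff A = sum pair_diff B\<close> inj by (simp add: sum.reindex mod_sum_eq)
  moreover have "?g ` A \<subseteq> S" "?g ` B \<subseteq> S" using assms(4) A B by (auto simp: bij_betw_def)
  ultimately have "?g ` A = ?g ` B"
    using distinct_k_sums_fewer_summands[OF assms(1,2)] inj assms(3) \<open>card A = card B\<close>
      \<open>card A \<le> k\<close>
    by (simp add: card_image)
  then have "A = B"
    using assms(4) A B inj_on_image_eq_iff[of ?g E A B] by (simp add: bij_betw_def)
  then show "A = {}" using \<open>A \<inter> B = {}\<close> by simp
qed

(* For k = 1 the hypothesis on c = m / (2N) says only c \<le> N, which is too weak; there the
   trivial bound m \<le> N^2 is used instead. *)
lemma moore_bound_imp_powr_bound:
  fixes m :: real and N k :: nat
  assumes "0 < k" and "1 \<le> N" and "0 \<le> m" and "m \<le> real N ^ 2"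
    and "1 \<le> m / (2 * N) \<Longrightarrow> m / (2 * N) * (m / (2 * N) - 1) ^ (k - 1) \<le> N"
  shows "(m / (2 * real k)) powr (real k / (real k + 1)) < N"
proof -
  have "m / (2 * real k) < N powr ((real k + 1) / real k)"
  proof (cases "k = 1")
    case True
    have "0 < real N ^ 2" using assms(2) by simp
    then have "m / 2 < real N ^ 2" using assms(4) by linarith
    then show ?thesis using True by (simp add: powr_realpow)
  next
    case False
    define t where "t = real N powr (1 / k)"
    define c where "c = m / (2 * N)"
    have "1 \<le> t" using assms(2) by (simp add: t_def ge_one_powr_ge_zero)
    have "c < 1 + t"
    proof (cases "c \<le> 1")
      case False
      have "(c - 1) ^ k = (c - 1) * (c - 1) ^ (k - 1)"
        using assms(1) by (simp add: power_eq_if)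
      also have "\<dots> < c * (c - 1) ^ (k - 1)" using False by simp
      also have "\<dots> \<le> t ^ k"
        using assms(1,2,5) False by (simp add: c_def t_def powr_realpow[symmetric] powr_powr)
      finally show ?thesis using \<open>1 \<le> t\<close> power_less_imp_less_base by fastforce
    qed (use \<open>1 \<le> t\<close> in simp)
    have "m = 2 * N * c" using assms(2) by (simp add: c_def)
    also have "\<dots> < 2 * N * (2 * t)" using \<open>c < 1 + t\<close> \<open>1 \<le> t\<close> assms(2) by simp
    also have "\<dots> \<le> 2 * real k * (N * t)" using False assms(1,2) \<open>1 \<le> t\<close> by simp
    also have "N * t = N powr ((real k + 1) / real k)"
      using assms(1,2) by (simp add: t_def add_divide_distrib powr_add)
    finally show ?thesis using assms(1) by (simp add: field_simps)
  qed
  then have "(m / (2 * real k)) powr (real k / (real k + 1))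
      < (N powr ((real k + 1) / real k)) powr (real k / (real k + 1))"
    using assms(1,3) by (intro powr_less_mono2) simp_all
  also have "\<dots> = N" using assms(1,2) by (simp add: powr_powr)
  finally show ?thesis .
qed

lemma diffset_mod_eq_image: "diffset_mod p X Y = (\<lambda>e. pair_diff e mod p) ` (X \<times> Y)"
  unfolding diffset_mod_def pair_diff_def by force

lemma obtain_bij_betw_subset:
  assumes "B \<subseteq> f ` A"
  obtains C where "C \<subseteq> A" and "bij_betw f C B"
proof
  show "inv_into A f ` B \<subseteq> A" using assms by (auto intro: inv_into_into)
  show "bij_betw f (inv_into A f ` B) B"
    using assms unfolding bij_betw_def by (auto simp: inj_on_def f_inv_into_f image_image subset_iff)
qed

lemma card_covered_powr_bound:
  assumes "distinct_k_sums p k S" and "0 < k" and "finite X" and "finite Y"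
    and "card X = N" and "card Y = N" and "1 \<le> N"
  shows "(real (card (S \<inter> diffset_mod p X Y)) / (2 * real k)) powr (real k / (real k + 1)) < N"
proof -
  define g :: "int \<times> int \<Rightarrow> int" where "g = (\<lambda>e. pair_diff e mod p)"
  define S' where "S' = S \<inter> diffset_mod p X Y"
  have "S' \<subseteq> g ` (X \<times> Y)" by (auto simp: S'_def diffset_mod_eq_image g_def)
  then obtain E where "E \<subseteq> X \<times> Y" and bij: "bij_betw g E S'" by (rule obtain_bij_betw_subset)
  have "finite S'"
    using assms(3,4) by (simp add: S'_def diffset_mod_eq_image)
  have "card S' \<le> N ^ 2"
  proof -
    have "card S' = card E" using bij by (simp add: bij_betw_same_card)
    also have "\<dots> \<le> card (X \<times> Y)"
      by (rule card_mono) (use \<open>E \<subseteq> X \<times> Y\<close> assms(3,4) in auto)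
    finally show ?thesis using assms(5,6) by (simp add: card_cartesian_product power2_eq_square)
  qed
  show ?thesis
  proof (cases "2 * k \<le> card S'")
    case False
    then have "real (card S') / (2 * real k) < 1" by simp
    then have "(real (card S') / (2 * real k)) powr (real k / (real k + 1))
        < 1 powr (real k / (real k + 1))"
      using assms(2) by (intro powr_less_mono2) simp_all
    also have "\<dots> \<le> N" using assms(7) by simp
    finally show ?thesis by (simp only: S'_def)
  next
    case True
    have "distinct_diff_sums k E"
      using distinct_k_sums_imp_distinct_diff_sums[OF distinct_k_sums_subset[OF assms(1)]
          \<open>finite S'\<close> True] bij
      by (simp add: S'_def g_def)
    moreover have "card E = card S'" using bij by (simp add: bij_betw_same_card)
    ultimately show ?thesis
      using moore_bound_imp_powr_bound[OF assms(2,7), of "real (card S')"] \<open>card S' \<le> N ^ 2\<close>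
        distinct_diff_sums_card_bound[OF \<open>E \<subseteq> X \<times> Y\<close> assms(3,4) _ _ _ assms(2), of N]
        assms(5,6)
      by (simp add: S'_def)
  qed
qed

lemma bsgs1_complexity_attained:
  assumes "0 < p" and "\<alpha> \<le> 1" and "S \<subseteq> zp p"
  obtains X Y where "X \<subseteq> zp p" and "Y \<subseteq> zp p"
    and "card X = bsgs1_complexity p \<alpha> S" and "card Y = bsgs1_complexity p \<alpha> S"
    and "\<alpha> * real (card S) \<le> real (card (S \<inter> diffset_mod p X Y))"
proof -
  have "zp p \<subseteq> diffset_mod p (zp p) (zp p)"
    using assms(1) unfolding diffset_mod_def zp_def by force
  then have "S \<inter> diffset_mod p (zp p) (zp p) = S" using assms(3) by auto
  then have "real (card (S \<inter> diffset_mod p (zp p) (zp p))) \<ge> \<alpha> * real (card S)"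
    using assms(2) mult_left_le[of \<alpha> "real (card S)"] by (simp add: mult.commute)
  then have "\<exists>n X Y. X \<subseteq> zp p \<and> Y \<subseteq> zp p \<and> card X = n \<and> card Y = n \<and>
      real (card (S \<inter> diffset_mod p X Y)) \<ge> \<alpha> * real (card S)"
    by (intro exI[of _ "card (zp p)"] exI[of _ "zp p"] conjI) simp_all
  then have "\<exists>X Y. X \<subseteq> zp p \<and> Y \<subseteq> zp p \<and> card X = bsgs1_complexity p \<alpha> S \<and>
      card Y = bsgs1_complexity p \<alpha> S \<and> real (card (S \<inter> diffset_mod p X Y)) \<ge> \<alpha> * real (card S)"
    unfolding bsgs1_complexity_def by (rule LeastI_ex)
  then show ?thesis using that by auto
qed

theorem theorem7:
  fixes p :: int and \<alpha> :: real and k :: nat and S :: "int set"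
  assumes "prime p" and "0 < \<alpha>" and "\<alpha> \<le> 1" and "0 < k"
    and "S \<subseteq> zp p" and "S \<noteq> {}"
    and "distinct_k_sums p k S"
  shows "real (bsgs1_complexity p \<alpha> S) >
           (\<alpha> * real (card S) / (2 * real k)) powr (real k / (real k + 1))"
proof -
  obtain X Y where XY: "X \<subseteq> zp p" "Y \<subseteq> zp p"
    and card: "card X = bsgs1_complexity p \<alpha> S" "card Y = bsgs1_complexity p \<alpha> S"
    and covers: "\<alpha> * real (card S) \<le> real (card (S \<inter> diffset_mod p X Y))"
    using bsgs1_complexity_attained[OF prime_gt_0_int[OF assms(1)] assms(3,5)] by blast
  have "finite (zp p)" by (simp add: zp_def)
  then have "finite X" "finite Y" "finite S" using XY assms(5) finite_subset by blast+
  then have "0 < \<alpha> * real (card S)" using assms(2,6) by (simp add: card_gt_0_iff)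
  then have "X \<noteq> {}" using covers by (auto simp: diffset_mod_def)
  then have "0 < card X" using \<open>finite X\<close> by (simp add: card_gt_0_iff)
  then have "1 \<le> bsgs1_complexity p \<alpha> S" using card by simp
  have "(\<alpha> * real (card S) / (2 * real k)) powr (real k / (real k + 1))
      \<le> (real (card (S \<inter> diffset_mod p X Y)) / (2 * real k)) powr (real k / (real k + 1))"
    using covers \<open>0 < \<alpha> * real (card S)\<close> by (intro powr_mono2 divide_right_mono) simp_all
  also have "\<dots> < bsgs1_complexity p \<alpha> S"
    using card_covered_powr_bound[OF assms(7,4) \<open>finite X\<close> \<open>finite Y\<close> card \<open>1 \<le> _\<close>] .
  finally show ?thesis .
qed

end
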